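(* Let $f\in C^\infty(\mathbb{R})$ with $f'(0)=0$, let $u_0\in C^\infty(\mathbb{R})$ be bounded with bounded derivatives, and let $u\in C^\infty((0,\infty)\times\mathbb{R},\mathbb{R})$ be the smooth solution of $u_t=u_{xx}+f'(u)u_x$, $u(0,\cdot)=u_0$. Assume there exists $(t_0,\xi_0)\in(0,\infty)\times\mathbb{R}$ such that $$u(t_0,\xi_0)=0,\quad u_x(t_0,\xi_0)=0,\quad u_{xx}(t_0,\xi_0)\neq0.$$ Then for $t<t_0$ near $t_0$ there exist two roots $\xi_{1,2}(t)$ of $u(t,\cdot)$ near $\xi_0$ such that $$\xi_{1,2}(t)-\xi_0=\pm\sqrt{2(t_0-t)}+\mathcal{O}(t_0-t),\qquad u_x(t,\xi_{1,2}(t))=\pm\sqrt{2(t_0-t)}\,u_{xx}(t_0,\xi_0)+\mathcal{O}(t_0-t)$$ as $t\to t_0^-$, and for $t>t_0$ near $t_0$ no roots of $u(t,\cdot)$ near $\xi_0$ exist. *)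

theory Defs
  imports "HOL-Analysis.Analysis" "HOL-Library.Landau_Symbols"
begin

definition smooth_real :: "(real \<Rightarrow> real) \<Rightarrow> bool" where
  "smooth_real g \<longleftrightarrow> (\<forall>n x. ((deriv ^^ n) g) differentiable (at x))"

text \<open>Partial derivatives of a function of (t,x): True = d/dt, False = d/dx.\<close>
definition pd :: "bool \<Rightarrow> (real \<times> real \<Rightarrow> real) \<Rightarrow> real \<times> real \<Rightarrow> real" where
  "pd b g = (\<lambda>(t, x). if b then deriv (\<lambda>s. g (s, x)) t else deriv (\<lambda>y. g (t, y)) x)"

definition smooth_on2 :: "(real \<times> real) set \<Rightarrow> (real \<times> real \<Rightarrow> real) \<Rightarrow> bool" where
  "smooth_on2 S g \<longleftrightarrow>
     (\<forall>ds. continuous_on S (fold pd ds g) \<and>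
        (\<forall>t x. (t, x) \<in> S \<longrightarrow>
           ((\<lambda>s. fold pd ds g (s, x)) has_real_derivative pd True (fold pd ds g) (t, x)) (at t) \<and>
           ((\<lambda>y. fold pd ds g (t, y)) has_real_derivative pd False (fold pd ds g) (t, x)) (at x)))"

end

theory Submission
  imports Defs "HOL-Real_Asymp.Real_Asymp"
begin

text \<open>
  Since \<open>u_x\<close> vanishes at the degenerate zero \<open>(t0, \<xi>0)\<close>, the equation gives \<open>u_t = u_xx = a\<close> there.
  Taylor's theorem with bounded third derivatives then yields
    \<open>u(t, \<xi>0 + y) = a ((t - t0) + y^2/2) + O((t - t0)^2 + |t - t0| |y| + |y|^3)\<close> and
    \<open>u_x(t, \<xi>0 + y) = a y + O(|t - t0| + y^2)\<close>.
  For \<open>t = t0 - s\<close> and a suitable constant \<open>K\<close>, the model \<open>a (y^2/2 - s)\<close> has opposite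
  signs at \<open>|y| = sqrt(2s) - K s\<close> and \<open>|y| = sqrt(2s) + K s\<close>, with a margin of order \<open>s^(3/2)\<close>
  that beats the error, so the intermediate value theorem gives roots within \<open>K s\<close> of
  \<open>\<xi>0 \<plusminus> sqrt(2s)\<close>, and the slope estimate gives \<open>u_x\<close> there. For \<open>t > t0\<close> the model has no zeros and dominates the error.
\<close>

lemma Taylor2_remainder_bound:
  fixes f f' f'' :: "real \<Rightarrow> real"
  assumes f': "\<And>x. x \<in> {lo..hi} \<Longrightarrow> (f has_real_derivative f' x) (at x)"
    and f'': "\<And>x. x \<in> {lo..hi} \<Longrightarrow> (f' has_real_derivative f'' x) (at x)"
    and bound: "\<And>x. x \<in> {lo..hi} \<Longrightarrow> \<bar>f'' x - c\<bar> \<le> B"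
    and p: "p \<in> {lo..hi}" and q: "q \<in> {lo..hi}"
  shows "\<bar>f q - f p - f' p * (q - p) - c / 2 * (q - p)\<^sup>2\<bar> \<le> B / 2 * (q - p)\<^sup>2"
proof (cases "q = p")
  case False
  define derivs where "derivs m = (if m = 0 then f else if m = 1 then f' else f'')" for m :: nat
  have "\<exists>\<zeta>. (if q < p then q < \<zeta> \<and> \<zeta> < p else p < \<zeta> \<and> \<zeta> < q) \<and>
      f q = (\<Sum>m<2. derivs m p / fact m * (q - p) ^ m) + derivs 2 \<zeta> / fact 2 * (q - p)\<^sup>2"
    by (rule Taylor[where a = lo and b = hi])
      (use False f' f'' p q in \<open>auto simp: derivs_def less_2_cases_iff\<close>)
  then obtain \<zeta> where between: "if q < p then q < \<zeta> \<and> \<zeta> < p else p < \<zeta> \<and> \<zeta> < q"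
    and "f q = (\<Sum>m<2. derivs m p / fact m * (q - p) ^ m) + derivs 2 \<zeta> / fact 2 * (q - p)\<^sup>2"
    by blast
  then have expansion: "f q = f p + f' p * (q - p) + f'' \<zeta> / 2 * (q - p)\<^sup>2"
    by (simp add: derivs_def numeral_2_eq_2 lessThan_Suc)
  have \<zeta>: "\<zeta> \<in> {lo..hi}"
    using between p q by (auto split: if_splits)
  have "f q - f p - f' p * (q - p) - c / 2 * (q - p)\<^sup>2 = (f'' \<zeta> - c) / 2 * (q - p)\<^sup>2"
    using expansion by (simp add: field_simps)
  also have "\<bar>\<dots>\<bar> = \<bar>f'' \<zeta> - c\<bar> / 2 * (q - p)\<^sup>2"
    by (simp add: abs_mult)
  also have "\<dots> \<le> B / 2 * (q - p)\<^sup>2"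
    using bound[OF \<zeta>] by (intro mult_right_mono divide_right_mono) auto
  finally show ?thesis .
qed simp

lemma smooth_on2_subset: "smooth_on2 S g \<Longrightarrow> T \<subseteq> S \<Longrightarrow> smooth_on2 T g"
  unfolding smooth_on2_def by (blast intro: continuous_on_subset)

lemma smooth_on2_derivatives_bounded:
  assumes "smooth_on2 K g" and "compact K"
  obtains L where "\<And>ds p. length ds \<le> n \<Longrightarrow> p \<in> K \<Longrightarrow> \<bar>fold pd ds g p\<bar> \<le> L"
proof -
  have "finite {ds :: bool list. length ds \<le> n}"
    using finite_lists_length_le[of "UNIV :: bool set" n] by simp
  then have "compact (\<Union>ds\<in>{ds. length ds \<le> n}. fold pd ds g ` K)"
    using assms by (auto intro!: compact_continuous_image simp: smooth_on2_def)
  then obtain L where "\<forall>y\<in>(\<Union>ds\<in>{ds. length ds \<le> n}. fold pd ds g ` K). norm y \<le> L"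
    by (meson bounded_iff compact_imp_bounded)
  then show thesis
    by (intro that) auto
qed

locale smooth_fold =
  fixes g :: "real \<times> real \<Rightarrow> real" and t0 \<xi>0 r a L :: real
  assumes smooth: "smooth_on2 ({t0 - r..t0 + r} \<times> {\<xi>0 - r..\<xi>0 + r}) g"
    and r_pos: "0 < r" and r_le_1: "r \<le> 1"
    and derivatives_bounded: "\<And>ds p. length ds \<le> 3 \<Longrightarrow>
      p \<in> {t0 - r..t0 + r} \<times> {\<xi>0 - r..\<xi>0 + r} \<Longrightarrow> \<bar>fold pd ds g p\<bar> \<le> L"
    and vanishes: "g (t0, \<xi>0) = 0"
    and critical: "pd False g (t0, \<xi>0) = 0"
    and time_derivative: "pd True g (t0, \<xi>0) = a"
    and second_space_derivative: "pd False (pd False g) (t0, \<xi>0) = a"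
begin

lemma has_derivative_time:
  "\<bar>t - t0\<bar> \<le> r \<Longrightarrow> \<bar>x - \<xi>0\<bar> \<le> r \<Longrightarrow>
    ((\<lambda>s. fold pd ds g (s, x)) has_real_derivative pd True (fold pd ds g) (t, x)) (at t)"
  using smooth unfolding smooth_on2_def by (auto simp: abs_le_iff)

lemma has_derivative_space:
  "\<bar>t - t0\<bar> \<le> r \<Longrightarrow> \<bar>x - \<xi>0\<bar> \<le> r \<Longrightarrow>
    ((\<lambda>y. fold pd ds g (t, y)) has_real_derivative pd False (fold pd ds g) (t, x)) (at x)"
  using smooth unfolding smooth_on2_def by (auto simp: abs_le_iff)

lemma lipschitz_in_time:
  assumes "length ds \<le> 2" and "\<bar>t - t0\<bar> \<le> r" "\<bar>t' - t0\<bar> \<le> r" "\<bar>x - \<xi>0\<bar> \<le> r"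
  shows "\<bar>fold pd ds g (t, x) - fold pd ds g (t', x)\<bar> \<le> L * \<bar>t - t'\<bar>"
proof -
  have "norm (fold pd ds g (t, x) - fold pd ds g (t', x)) \<le> L * norm (t - t')"
  proof (rule field_differentiable_bound[where S = "{t0 - r..t0 + r}"])
    fix s assume s: "s \<in> {t0 - r..t0 + r}"
    then show "((\<lambda>s. fold pd ds g (s, x)) has_field_derivative pd True (fold pd ds g) (s, x))
        (at s within {t0 - r..t0 + r})"
      using has_derivative_time assms by (auto intro: has_field_derivative_at_within simp: abs_le_iff)
    show "norm (pd True (fold pd ds g) (s, x)) \<le> L"
      using derivatives_bounded[of "ds @ [True]" "(s, x)"] s assms by (auto simp: abs_le_iff)
  qed (use assms in \<open>auto simp: abs_le_iff\<close>)
  then show ?thesis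
    by simp
qed

lemma lipschitz_in_space:
  assumes "length ds \<le> 2" and "\<bar>t - t0\<bar> \<le> r" "\<bar>x - \<xi>0\<bar> \<le> r" "\<bar>x' - \<xi>0\<bar> \<le> r"
  shows "\<bar>fold pd ds g (t, x) - fold pd ds g (t, x')\<bar> \<le> L * \<bar>x - x'\<bar>"
proof -
  have "norm (fold pd ds g (t, x) - fold pd ds g (t, x')) \<le> L * norm (x - x')"
  proof (rule field_differentiable_bound[where S = "{\<xi>0 - r..\<xi>0 + r}"])
    fix y assume y: "y \<in> {\<xi>0 - r..\<xi>0 + r}"
    then show "((\<lambda>y. fold pd ds g (t, y)) has_field_derivative pd False (fold pd ds g) (t, y))
        (at y within {\<xi>0 - r..\<xi>0 + r})"
      using has_derivative_space assms by (auto intro: has_field_derivative_at_within simp: abs_le_iff)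
    show "norm (pd False (fold pd ds g) (t, y)) \<le> L"
      using derivatives_bounded[of "ds @ [False]" "(t, y)"] y assms by (auto simp: abs_le_iff)
  qed (use assms in \<open>auto simp: abs_le_iff\<close>)
  then show ?thesis
    by simp
qed

lemma space_derivative_on_center_line:
  "\<bar>t - t0\<bar> \<le> r \<Longrightarrow> \<bar>pd False g (t, \<xi>0)\<bar> \<le> L * \<bar>t - t0\<bar>"
  using lipschitz_in_time[of "[False]" t t0 \<xi>0] r_pos critical by simp

lemma second_space_derivative_near_center:
  assumes t: "\<bar>t - t0\<bar> \<le> r" and x: "\<bar>x - \<xi>0\<bar> \<le> r"
  shows "\<bar>pd False (pd False g) (t, x) - a\<bar> \<le> L * (\<bar>x - \<xi>0\<bar> + \<bar>t - t0\<bar>)"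
  using lipschitz_in_space[of "[False, False]" t x \<xi>0] lipschitz_in_time[of "[False, False]" t t0 \<xi>0]
    t x r_pos second_space_derivative by (simp add: algebra_simps)

lemma value_on_center_line:
  assumes t: "\<bar>t - t0\<bar> \<le> r"
  shows "\<bar>g (t, \<xi>0) - a * (t - t0)\<bar> \<le> L / 2 * (t - t0)\<^sup>2"
proof -
  have "\<bar>g (t, \<xi>0) - g (t0, \<xi>0) - pd True g (t0, \<xi>0) * (t - t0) - 0 / 2 * (t - t0)\<^sup>2\<bar>
      \<le> L / 2 * (t - t0)\<^sup>2"
  proof (rule Taylor2_remainder_bound[where lo = "t0 - r" and hi = "t0 + r"])
    fix s assume "s \<in> {t0 - r..t0 + r}"
    then have s: "\<bar>s - t0\<bar> \<le> r"
      by (simp add: abs_le_iff)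
    show "((\<lambda>s. g (s, \<xi>0)) has_real_derivative pd True g (s, \<xi>0)) (at s)"
      using has_derivative_time[OF s, of \<xi>0 "[]"] r_pos by simp
    show "((\<lambda>s. pd True g (s, \<xi>0)) has_real_derivative pd True (pd True g) (s, \<xi>0)) (at s)"
      using has_derivative_time[OF s, of \<xi>0 "[True]"] r_pos by simp
    show "\<bar>pd True (pd True g) (s, \<xi>0) - 0\<bar> \<le> L"
      using derivatives_bounded[of "[True, True]" "(s, \<xi>0)"] s r_pos by (simp add: abs_le_iff)
  qed (use t r_pos in \<open>auto simp: abs_le_iff\<close>)
  then show ?thesis
    by (simp add: vanishes time_derivative)
qed

lemma L_nonneg: "0 \<le> L"
  using derivatives_bounded[of "[]" "(t0, \<xi>0)"] r_pos by simp

lemma space_Taylor: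
  assumes t: "\<bar>t - t0\<bar> \<le> r" and y: "\<bar>y\<bar> \<le> r"
  shows "\<bar>g (t, \<xi>0 + y) - g (t, \<xi>0) - pd False g (t, \<xi>0) * y - a / 2 * y\<^sup>2\<bar>
    \<le> L * (\<bar>y\<bar> + \<bar>t - t0\<bar>) / 2 * y\<^sup>2"
proof -
  have "\<bar>g (t, \<xi>0 + y) - g (t, \<xi>0) - pd False g (t, \<xi>0) * ((\<xi>0 + y) - \<xi>0) - a / 2 * ((\<xi>0 + y) - \<xi>0)\<^sup>2\<bar>
      \<le> L * (\<bar>y\<bar> + \<bar>t - t0\<bar>) / 2 * ((\<xi>0 + y) - \<xi>0)\<^sup>2"
  proof (rule Taylor2_remainder_bound[where f = "\<lambda>x. g (t, x)" and f' = "\<lambda>x. pd False g (t, x)"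
        and f'' = "\<lambda>x. pd False (pd False g) (t, x)" and lo = "\<xi>0 - \<bar>y\<bar>" and hi = "\<xi>0 + \<bar>y\<bar>"])
    fix x assume "x \<in> {\<xi>0 - \<bar>y\<bar>..\<xi>0 + \<bar>y\<bar>}"
    then have x: "\<bar>x - \<xi>0\<bar> \<le> \<bar>y\<bar>"
      by (simp add: abs_le_iff)
    then have xr: "\<bar>x - \<xi>0\<bar> \<le> r"
      using y by linarith
    show "((\<lambda>x. g (t, x)) has_real_derivative pd False g (t, x)) (at x)"
      using has_derivative_space[OF t xr, of "[]"] by simp
    show "((\<lambda>x. pd False g (t, x)) has_real_derivative pd False (pd False g) (t, x)) (at x)"
      using has_derivative_space[OF t xr, of "[False]"] by simp
    have "L * (\<bar>x - \<xi>0\<bar> + \<bar>t - t0\<bar>) \<le> L * (\<bar>y\<bar> + \<bar>t - t0\<bar>)"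
      using x L_nonneg by (intro mult_left_mono) auto
    then show "\<bar>pd False (pd False g) (t, x) - a\<bar> \<le> L * (\<bar>y\<bar> + \<bar>t - t0\<bar>)"
      using second_space_derivative_near_center[OF t xr] by linarith
  qed (auto simp: abs_le_iff)
  then show ?thesis
    by simp
qed

lemma value_near_center:
  assumes t: "\<bar>t - t0\<bar> \<le> r" and y: "\<bar>y\<bar> \<le> r"
  shows "\<bar>g (t, \<xi>0 + y) - a * ((t - t0) + y\<^sup>2 / 2)\<bar>
    \<le> 2 * L * ((t - t0)\<^sup>2 + \<bar>t - t0\<bar> * \<bar>y\<bar> + \<bar>y\<bar> ^ 3)"
proof -
  define T Y where "T = \<bar>t - t0\<bar>" and "Y = \<bar>y\<bar>"
  have TY: "0 \<le> T" "0 \<le> Y" "Y \<le> 1" "y\<^sup>2 = Y\<^sup>2" "(t - t0)\<^sup>2 = T\<^sup>2"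
    using y r_le_1 by (auto simp: T_def Y_def)
  have "g (t, \<xi>0 + y) - a * ((t - t0) + y\<^sup>2 / 2) =
      (g (t, \<xi>0 + y) - g (t, \<xi>0) - pd False g (t, \<xi>0) * y - a / 2 * y\<^sup>2)
      + (g (t, \<xi>0) - a * (t - t0)) + pd False g (t, \<xi>0) * y"
    by (simp add: algebra_simps)
  moreover have "\<bar>pd False g (t, \<xi>0) * y\<bar> \<le> L * T * Y"
    using space_derivative_on_center_line[OF t] TY by (simp add: T_def Y_def abs_mult mult_right_mono)
  ultimately have "\<bar>g (t, \<xi>0 + y) - a * ((t - t0) + y\<^sup>2 / 2)\<bar>
      \<le> L * (Y + T) / 2 * Y\<^sup>2 + L / 2 * T\<^sup>2 + L * T * Y"
    using space_Taylor[OF t y] value_on_center_line[OF t] unfolding T_def[symmetric] Y_def[symmetric] TY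
    by linarith
  also have "\<dots> = L / 2 * Y ^ 3 + L / 2 * (T * Y\<^sup>2) + L / 2 * T\<^sup>2 + L * (T * Y)"
    by (simp add: algebra_simps power2_eq_square power3_eq_cube)
  also have "\<dots> \<le> 2 * L * (T\<^sup>2 + T * Y + Y ^ 3)"
  proof -
    have "L * (T * Y\<^sup>2) \<le> L * (T * Y)"
      using TY L_nonneg by (intro mult_left_mono) (auto simp: power2_eq_square mult_left_le)
    moreover have "0 \<le> L * T\<^sup>2" "0 \<le> L * Y ^ 3" "0 \<le> L * (T * Y)"
      using TY L_nonneg by auto
    ultimately show ?thesis
      by (simp add: algebra_simps)
  qed
  finally show ?thesis
    unfolding T_def Y_def by simp
qed

lemma slope_near_center:
  assumes t: "\<bar>t - t0\<bar> \<le> r" and y: "\<bar>y\<bar> \<le> r"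
  shows "\<bar>pd False g (t, \<xi>0 + y) - a * y\<bar> \<le> 2 * L * (\<bar>t - t0\<bar> + y\<^sup>2)"
proof -
  have "norm ((pd False g (t, \<xi>0 + y) - a * (\<xi>0 + y)) - (pd False g (t, \<xi>0) - a * \<xi>0))
      \<le> L * (\<bar>y\<bar> + \<bar>t - t0\<bar>) * norm ((\<xi>0 + y) - \<xi>0)"
  proof (rule field_differentiable_bound[where f = "\<lambda>x. pd False g (t, x) - a * x"
        and f' = "\<lambda>x. pd False (pd False g) (t, x) - a" and S = "{\<xi>0 - \<bar>y\<bar>..\<xi>0 + \<bar>y\<bar>}"])
    fix x assume "x \<in> {\<xi>0 - \<bar>y\<bar>..\<xi>0 + \<bar>y\<bar>}"
    then have x: "\<bar>x - \<xi>0\<bar> \<le> \<bar>y\<bar>"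
      by (simp add: abs_le_iff)
    then have xr: "\<bar>x - \<xi>0\<bar> \<le> r"
      using y by linarith
    show "((\<lambda>x. pd False g (t, x) - a * x) has_field_derivative pd False (pd False g) (t, x) - a)
        (at x within {\<xi>0 - \<bar>y\<bar>..\<xi>0 + \<bar>y\<bar>})"
    proof -
      have "((\<lambda>x. pd False g (t, x) - a * x) has_real_derivative pd False (pd False g) (t, x) - a * 1) (at x)"
        using has_derivative_space[OF t xr, of "[False]"] by (intro DERIV_diff DERIV_cmult DERIV_ident) simp
      then show ?thesis
        by (simp add: has_field_derivative_at_within)
    qed
    have "L * (\<bar>x - \<xi>0\<bar> + \<bar>t - t0\<bar>) \<le> L * (\<bar>y\<bar> + \<bar>t - t0\<bar>)"
      using x L_nonneg by (intro mult_left_mono) auto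
    then show "norm (pd False (pd False g) (t, x) - a) \<le> L * (\<bar>y\<bar> + \<bar>t - t0\<bar>)"
      using second_space_derivative_near_center[OF t xr] by simp
  qed (auto simp: abs_le_iff)
  also have "L * (\<bar>y\<bar> + \<bar>t - t0\<bar>) * norm ((\<xi>0 + y) - \<xi>0) = L * y\<^sup>2 + L * \<bar>t - t0\<bar> * \<bar>y\<bar>"
    by (simp add: algebra_simps power2_eq_square abs_mult_self_eq)
  also have "\<dots> \<le> L * y\<^sup>2 + L * \<bar>t - t0\<bar>"
    using y r_le_1 L_nonneg by (simp add: mult_left_le)
  finally have "\<bar>pd False g (t, \<xi>0 + y) - a * y - pd False g (t, \<xi>0)\<bar> \<le> L * y\<^sup>2 + L * \<bar>t - t0\<bar>"
    by (simp add: algebra_simps)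
  moreover have "0 \<le> L * y\<^sup>2"
    using L_nonneg by simp
  ultimately show ?thesis
    using space_derivative_on_center_line[OF t] by (simp add: algebra_simps abs_le_iff)
qed

end

lemma sign_from_approx:
  fixes a v w e :: real
  assumes approx: "\<bar>v - a * w\<bar> \<le> e"
  shows sign_from_approx_pos: "e < \<bar>a\<bar> * w \<Longrightarrow> 0 < a * v"
    and sign_from_approx_neg: "e < - (\<bar>a\<bar> * w) \<Longrightarrow> a * v < 0"
proof -
  have split: "a * v = \<bar>a\<bar> * (\<bar>a\<bar> * w) + a * (v - a * w)"
    by (simp add: algebra_simps abs_mult_self_eq)
  have error: "\<bar>a * (v - a * w)\<bar> \<le> \<bar>a\<bar> * e"
    using approx by (simp add: abs_mult mult_left_mono)
  have "0 \<le> e"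
    using approx by linarith
  show "0 < a * v" if "e < \<bar>a\<bar> * w"
  proof -
    have "a \<noteq> 0"
      using that \<open>0 \<le> e\<close> by auto
    then have "\<bar>a\<bar> * e < \<bar>a\<bar> * (\<bar>a\<bar> * w)"
      using that by simp
    then show ?thesis
      using split error by linarith
  qed
  show "a * v < 0" if "e < - (\<bar>a\<bar> * w)"
  proof -
    have "a \<noteq> 0"
      using that \<open>0 \<le> e\<close> by auto
    then have "\<bar>a\<bar> * e < \<bar>a\<bar> * - (\<bar>a\<bar> * w)"
      using that by (intro mult_strict_left_mono) auto
    then show ?thesis
      using split error by linarith
  qed
qed

(* At y = q \<plusminus> K s, where q = sqrt (2 s), the model a (y^2/2 - s) is at least |a| K s q / 2 away
   from zero; 38 M < |a| K makes this margin exceed the error 19 M s q of the value estimate. *)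
lemma fold_sign_margins:
  fixes s q a K M :: real
  assumes s: "0 < s" and q: "q\<^sup>2 = 2 * s" "0 \<le> K * s" "K * s \<le> q"
    and margin: "38 * M < \<bar>a\<bar> * K" and M: "0 \<le> M"
  shows "19 * M * (s * q) < \<bar>a\<bar> * ((q + K * s)\<^sup>2 / 2 - s)"
    and "19 * M * (s * q) < - (\<bar>a\<bar> * ((q - K * s)\<^sup>2 / 2 - s))"
proof -
  have "0 < q"
    using q s by (cases "q = 0") auto
  then have sq: "0 < s * q"
    using s by simp
  have "38 * M * (s * q) < \<bar>a\<bar> * K * (s * q)"
    using margin sq by (rule mult_strict_right_mono)
  moreover have "19 * M * (s * q) \<le> 38 * M * (s * q)"
    using M sq by (intro mult_right_mono) auto
  ultimately have key: "19 * M * (s * q) < \<bar>a\<bar> * K * (s * q) / 2"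
    by linarith
  have "(q + K * s)\<^sup>2 / 2 - s = K * (s * q) + (K * s)\<^sup>2 / 2"
    using q(1) by (simp add: power2_eq_square algebra_simps)
  then have "\<bar>a\<bar> * K * (s * q) \<le> \<bar>a\<bar> * ((q + K * s)\<^sup>2 / 2 - s)"
    by (simp add: mult_left_mono algebra_simps)
  moreover have "0 < \<bar>a\<bar> * K * (s * q)"
    using margin M sq by simp
  ultimately show "19 * M * (s * q) < \<bar>a\<bar> * ((q + K * s)\<^sup>2 / 2 - s)"
    using key by linarith
  have "(K * s) * (K * s) \<le> K * (s * q)"
    using q mult_left_mono[of "K * s" q "K * s"] by (simp add: ac_simps)
  moreover have "(q - K * s)\<^sup>2 = q\<^sup>2 - 2 * (K * (s * q)) + (K * s) * (K * s)"
    by (simp add: power2_eq_square algebra_simps)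
  ultimately have "(q - K * s)\<^sup>2 / 2 - s \<le> - (K * (s * q) / 2)"
    using q(1) by linarith
  then have "\<bar>a\<bar> * ((q - K * s)\<^sup>2 / 2 - s) \<le> \<bar>a\<bar> * - (K * (s * q) / 2)"
    by (intro mult_left_mono) auto
  moreover have "\<bar>a\<bar> * - (K * (s * q) / 2) = - (\<bar>a\<bar> * K * (s * q) / 2)"
    by simp
  ultimately show "19 * M * (s * q) < - (\<bar>a\<bar> * ((q - K * s)\<^sup>2 / 2 - s))"
    using key by linarith
qed

locale fold_model =
  fixes U Ux :: "real \<Rightarrow> real \<Rightarrow> real" and a t0 \<xi>0 r M :: real
  assumes r_pos: "0 < r" and r_le_1: "r \<le> 1" and nondegenerate: "a \<noteq> 0" and M_nonneg: "0 \<le> M"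
    and continuous: "\<And>t x. \<bar>t - t0\<bar> \<le> r \<Longrightarrow> \<bar>x - \<xi>0\<bar> \<le> r \<Longrightarrow> isCont (U t) x"
    and value_approx: "\<And>t y. \<bar>t - t0\<bar> \<le> r \<Longrightarrow> \<bar>y\<bar> \<le> r \<Longrightarrow>
      \<bar>U t (\<xi>0 + y) - a * ((t - t0) + y\<^sup>2 / 2)\<bar> \<le> M * ((t - t0)\<^sup>2 + \<bar>t - t0\<bar> * \<bar>y\<bar> + \<bar>y\<bar> ^ 3)"
    and slope_approx: "\<And>t y. \<bar>t - t0\<bar> \<le> r \<Longrightarrow> \<bar>y\<bar> \<le> r \<Longrightarrow>
      \<bar>Ux t (\<xi>0 + y) - a * y\<bar> \<le> M * (\<bar>t - t0\<bar> + y\<^sup>2)"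
begin

(* The reflection x \<mapsto> 2 \<xi>0 - x exchanges the two root branches. *)
lemma reflect: "fold_model (\<lambda>t x. U t (2 * \<xi>0 - x)) (\<lambda>t x. - Ux t (2 * \<xi>0 - x)) a t0 \<xi>0 r M"
proof unfold_locales
  fix t x
  assume "\<bar>t - t0\<bar> \<le> r" "\<bar>x - \<xi>0\<bar> \<le> r"
  then have "isCont (U t) (2 * \<xi>0 - x)"
    by (intro continuous) auto
  then show "isCont (\<lambda>x. U t (2 * \<xi>0 - x)) x"
    by (rule isCont_o2[where f = "\<lambda>x. 2 * \<xi>0 - x", rotated]) (auto intro!: continuous_intros)
next
  fix t y
  assume ty: "\<bar>t - t0\<bar> \<le> r" "\<bar>y\<bar> \<le> r"
  have mirror: "2 * \<xi>0 - (\<xi>0 + y) = \<xi>0 + - y"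
    by simp
  show "\<bar>U t (2 * \<xi>0 - (\<xi>0 + y)) - a * ((t - t0) + y\<^sup>2 / 2)\<bar>
      \<le> M * ((t - t0)\<^sup>2 + \<bar>t - t0\<bar> * \<bar>y\<bar> + \<bar>y\<bar> ^ 3)"
    using value_approx[of t "- y"] ty unfolding mirror by simp
  have "- Ux t (\<xi>0 + - y) - a * y = - (Ux t (\<xi>0 + - y) - a * - y)"
    by simp
  then have "\<bar>- Ux t (\<xi>0 + - y) - a * y\<bar> = \<bar>Ux t (\<xi>0 + - y) - a * - y\<bar>"
    by (metis abs_minus_cancel)
  then show "\<bar>- Ux t (2 * \<xi>0 - (\<xi>0 + y)) - a * y\<bar> \<le> M * (\<bar>t - t0\<bar> + y\<^sup>2)"
    using slope_approx[of t "- y"] ty unfolding mirror by simp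
qed (use r_pos r_le_1 nondegenerate M_nonneg in auto)

lemma nonzero_after:
  assumes t: "0 < t - t0" "t - t0 \<le> e" and x: "\<bar>x - \<xi>0\<bar> \<le> e"
    and e: "e \<le> r" "2 * M * e < \<bar>a\<bar>"
  shows "U t x \<noteq> 0"
proof
  assume root: "U t x = 0"
  define T y where "T = t - t0" and "y = x - \<xi>0"
  have "T * T \<le> e * T"
    using t by (intro mult_right_mono) (auto simp: T_def)
  moreover have "T * \<bar>y\<bar> \<le> T * e"
    using t x by (intro mult_left_mono) (auto simp: T_def y_def)
  moreover have "\<bar>y\<bar> * y\<^sup>2 \<le> e * y\<^sup>2"
    using x by (intro mult_right_mono) (auto simp: y_def)
  moreover have "\<bar>y\<bar> ^ 3 = \<bar>y\<bar> * y\<^sup>2" "T\<^sup>2 = T * T" "\<bar>T\<bar> = T"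
    using t by (auto simp: T_def power2_eq_square power3_eq_cube abs_mult_self_eq)
  moreover have "2 * e * (T + y\<^sup>2 / 2) = e * T + T * e + e * y\<^sup>2"
    by (simp add: algebra_simps)
  ultimately have "T\<^sup>2 + \<bar>T\<bar> * \<bar>y\<bar> + \<bar>y\<bar> ^ 3 \<le> 2 * e * (T + y\<^sup>2 / 2)"
    by linarith
  then have "M * (T\<^sup>2 + \<bar>T\<bar> * \<bar>y\<bar> + \<bar>y\<bar> ^ 3) \<le> M * (2 * e * (T + y\<^sup>2 / 2))"
    using M_nonneg by (rule mult_left_mono)
  also have "\<dots> = 2 * M * e * (T + y\<^sup>2 / 2)"
    by simp
  also have "\<dots> < \<bar>a\<bar> * (T + y\<^sup>2 / 2)"
    using e t by (intro mult_strict_right_mono) (auto simp: T_def add_pos_nonneg)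
  also have "\<dots> = \<bar>U t (\<xi>0 + y) - a * (T + y\<^sup>2 / 2)\<bar>"
    using root t by (simp add: y_def T_def abs_mult)
  finally show False
    using value_approx[of t y] t x e by (simp add: T_def y_def)
qed

lemma value_before:
  assumes s: "0 < s" "s \<le> r" and y: "\<bar>y\<bar> \<le> 2 * sqrt (2 * s)" "\<bar>y\<bar> \<le> r"
  shows "\<bar>U (t0 - s) (\<xi>0 + y) - a * (y\<^sup>2 / 2 - s)\<bar> \<le> 19 * M * (s * sqrt (2 * s))"
proof -
  define q where "q = sqrt (2 * s)"
  have q: "q\<^sup>2 = 2 * s" "0 \<le> q"
    using s by (simp_all add: q_def)
  have "s * s \<le> 2 * s"
    using s r_le_1 by (intro mult_right_mono) auto
  then have "s \<le> q"
    unfolding q_def by (intro real_le_rsqrt) (simp add: power2_eq_square)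
  then have "s\<^sup>2 \<le> s * q"
    using s by (simp add: power2_eq_square mult_left_mono)
  moreover have "s * \<bar>y\<bar> \<le> 2 * (s * q)"
    using s y by (simp add: q_def mult_left_mono)
  moreover have "\<bar>y\<bar> ^ 3 \<le> (2 * q) ^ 3"
    using y by (intro power_mono) (auto simp: q_def)
  moreover have "(2 * q) ^ 3 = 16 * (s * q)"
    using q(1) by (simp add: power3_eq_cube power2_eq_square algebra_simps)
  ultimately have "s\<^sup>2 + s * \<bar>y\<bar> + \<bar>y\<bar> ^ 3 \<le> 19 * (s * q)"
    by linarith
  then have "M * (s\<^sup>2 + s * \<bar>y\<bar> + \<bar>y\<bar> ^ 3) \<le> 19 * M * (s * q)"
    using M_nonneg mult_left_mono by fastforce
  moreover have "\<bar>U (t0 - s) (\<xi>0 + y) - a * (y\<^sup>2 / 2 - s)\<bar> \<le> M * (s\<^sup>2 + s * \<bar>y\<bar> + \<bar>y\<bar> ^ 3)"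
    using value_approx[of "t0 - s" y] s y by (simp add: algebra_simps)
  ultimately show ?thesis
    unfolding q_def by linarith
qed

lemma root_right:
  assumes s: "0 < s" "s \<le> r" and small: "2 * sqrt (2 * s) \<le> r"
    and K: "38 * M < \<bar>a\<bar> * K" "K * s \<le> sqrt (2 * s)"
  shows "\<exists>x. U (t0 - s) x = 0 \<and> \<bar>x - \<xi>0 - sqrt (2 * s)\<bar> \<le> K * s"
proof -
  define q where "q = sqrt (2 * s)"
  have q: "q\<^sup>2 = 2 * s" "0 \<le> q" "2 * q \<le> r"
    using s small by (simp_all add: q_def)
  have "0 < \<bar>a\<bar> * K"
    using K(1) M_nonneg by linarith
  then have "0 < K"
    by (simp add: zero_less_mult_iff)
  then have Ks: "0 \<le> K * s" "K * s \<le> q"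
    using s K(2) by (simp_all add: q_def)
  have "a * U (t0 - s) (\<xi>0 + (q - K * s)) < 0"
  proof (rule sign_from_approx_neg)
    show "\<bar>U (t0 - s) (\<xi>0 + (q - K * s)) - a * ((q - K * s)\<^sup>2 / 2 - s)\<bar> \<le> 19 * M * (s * q)"
      using value_before[OF s, of "q - K * s"] Ks q by (simp add: q_def)
  qed (rule fold_sign_margins(2)[OF s(1) q(1) Ks K(1) M_nonneg])
  moreover have "0 < a * U (t0 - s) (\<xi>0 + (q + K * s))"
  proof (rule sign_from_approx_pos)
    show "\<bar>U (t0 - s) (\<xi>0 + (q + K * s)) - a * ((q + K * s)\<^sup>2 / 2 - s)\<bar> \<le> 19 * M * (s * q)"
      using value_before[OF s, of "q + K * s"] Ks q by (simp add: q_def)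
  qed (rule fold_sign_margins(1)[OF s(1) q(1) Ks K(1) M_nonneg])
  moreover have "continuous_on {\<xi>0 + (q - K * s)..\<xi>0 + (q + K * s)} (\<lambda>x. a * U (t0 - s) x)"
    using Ks q s by (intro continuous_at_imp_continuous_on ballI continuous_intros continuous) auto
  ultimately obtain x where "\<xi>0 + (q - K * s) \<le> x" "x \<le> \<xi>0 + (q + K * s)" "a * U (t0 - s) x = 0"
    using IVT'[of "\<lambda>x. a * U (t0 - s) x" "\<xi>0 + (q - K * s)" 0 "\<xi>0 + (q + K * s)"] Ks by auto
  then show ?thesis
    using nondegenerate by (auto simp: q_def abs_le_iff)
qed

lemma slope_near_right_root:
  assumes s: "0 < s" "s \<le> r" and small: "2 * sqrt (2 * s) \<le> r" "K * s \<le> sqrt (2 * s)"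
    and x: "\<bar>x - \<xi>0 - sqrt (2 * s)\<bar> \<le> K * s"
  shows "\<bar>Ux (t0 - s) x - sqrt (2 * s) * a\<bar> \<le> (9 * M + \<bar>a\<bar> * K) * s"
proof -
  define q y where "q = sqrt (2 * s)" and "y = x - \<xi>0"
  have q: "q\<^sup>2 = 2 * s" "0 \<le> q"
    using s by (simp_all add: q_def)
  have y: "\<bar>y\<bar> \<le> 2 * q"
    using x small by (simp add: q_def y_def abs_le_iff)
  then have "y\<^sup>2 \<le> (2 * q)\<^sup>2"
    by (metis abs_ge_zero power2_abs power_mono)
  then have "M * (s + y\<^sup>2) \<le> M * (9 * s)"
    using q M_nonneg by (intro mult_left_mono) (auto simp: power2_eq_square)
  moreover have "\<bar>Ux (t0 - s) (\<xi>0 + y) - a * y\<bar> \<le> M * (s + y\<^sup>2)"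
    using slope_approx[of "t0 - s" y] s y small by (simp add: q_def)
  moreover have "\<bar>a * y - q * a\<bar> \<le> \<bar>a\<bar> * (K * s)"
  proof -
    have "\<bar>a * y - q * a\<bar> = \<bar>a\<bar> * \<bar>y - q\<bar>"
      by (simp add: abs_mult[symmetric] algebra_simps)
    also have "\<dots> \<le> \<bar>a\<bar> * (K * s)"
      using x by (intro mult_left_mono) (auto simp: q_def y_def)
    finally show ?thesis .
  qed
  ultimately show ?thesis
    by (simp add: q_def y_def algebra_simps abs_le_iff)
qed

lemma root_left:
  assumes "0 < s" "s \<le> r" "2 * sqrt (2 * s) \<le> r" "38 * M < \<bar>a\<bar> * K" "K * s \<le> sqrt (2 * s)"
  shows "\<exists>x. U (t0 - s) x = 0 \<and> \<bar>x - \<xi>0 + sqrt (2 * s)\<bar> \<le> K * s"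
proof -
  obtain x where "U (t0 - s) (2 * \<xi>0 - x) = 0" "\<bar>x - \<xi>0 - sqrt (2 * s)\<bar> \<le> K * s"
    using fold_model.root_right[OF reflect assms] by blast
  then show ?thesis
    by (intro exI[of _ "2 * \<xi>0 - x"]) (simp add: abs_le_iff)
qed

lemma slope_near_left_root:
  assumes "0 < s" "s \<le> r" "2 * sqrt (2 * s) \<le> r" "K * s \<le> sqrt (2 * s)"
    and x: "\<bar>x - \<xi>0 + sqrt (2 * s)\<bar> \<le> K * s"
  shows "\<bar>Ux (t0 - s) x + sqrt (2 * s) * a\<bar> \<le> (9 * M + \<bar>a\<bar> * K) * s"
  using fold_model.slope_near_right_root[OF reflect assms(1-4), of "2 * \<xi>0 - x"] x
  by (simp add: abs_le_iff)

lemma roots_before: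
  assumes s: "0 < s" "s \<le> r" and small: "2 * sqrt (2 * s) \<le> r"
    and K: "38 * M < \<bar>a\<bar> * K" "K * s \<le> sqrt (2 * s)"
  obtains x1 x2 where "U (t0 - s) x1 = 0" "U (t0 - s) x2 = 0"
    "\<bar>x1 - \<xi>0 - sqrt (2 * s)\<bar> \<le> K * s" "\<bar>x2 - \<xi>0 + sqrt (2 * s)\<bar> \<le> K * s"
    "\<bar>x1 - \<xi>0\<bar> \<le> 2 * sqrt (2 * s)" "\<bar>x2 - \<xi>0\<bar> \<le> 2 * sqrt (2 * s)"
    "\<bar>Ux (t0 - s) x1 - sqrt (2 * s) * a\<bar> \<le> (9 * M + \<bar>a\<bar> * K) * s"
    "\<bar>Ux (t0 - s) x2 + sqrt (2 * s) * a\<bar> \<le> (9 * M + \<bar>a\<bar> * K) * s"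
proof -
  obtain x1 where x1: "U (t0 - s) x1 = 0" "\<bar>x1 - \<xi>0 - sqrt (2 * s)\<bar> \<le> K * s"
    using root_right[OF assms] by blast
  obtain x2 where x2: "U (t0 - s) x2 = 0" "\<bar>x2 - \<xi>0 + sqrt (2 * s)\<bar> \<le> K * s"
    using root_left[OF assms] by blast
  show thesis
  proof (rule that[OF x1(1) x2(1) x1(2) x2(2)])
    show "\<bar>x1 - \<xi>0\<bar> \<le> 2 * sqrt (2 * s)" "\<bar>x2 - \<xi>0\<bar> \<le> 2 * sqrt (2 * s)"
      using x1(2) x2(2) K(2) by (auto simp: abs_le_iff)
  qed (use slope_near_right_root[OF s small K(2) x1(2)] slope_near_left_root[OF s small K(2) x2(2)] in auto)
qed

end

lemma bigo_at_left_of_bound: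
  fixes f :: "real \<Rightarrow> real"
  assumes "b < t0" and "\<And>t. b < t \<Longrightarrow> t < t0 \<Longrightarrow> \<bar>f t\<bar> \<le> C * (t0 - t)"
  shows "f \<in> O[at_left t0](\<lambda>t. t0 - t)"
proof (rule bigoI[where c = C])
  show "\<forall>\<^sub>F t in at_left t0. norm (f t) \<le> C * norm (t0 - t)"
    using eventually_at_left_real[OF assms(1)] by eventually_elim (use assms(2) in auto)
qed

lemma (in fold_model) root_branches:
  assumes K: "38 * M < \<bar>a\<bar> * K" and \<epsilon>: "0 < \<epsilon>" "\<epsilon> \<le> r"
  obtains b \<xi>1 \<xi>2 where "b < t0" and "\<And>t. b < t \<Longrightarrow> t < t0 \<Longrightarrow>
    U t (\<xi>1 t) = 0 \<and> U t (\<xi>2 t) = 0 \<and> \<bar>\<xi>1 t - \<xi>0\<bar> < \<epsilon> \<and> \<bar>\<xi>2 t - \<xi>0\<bar> < \<epsilon> \<and>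
    \<bar>\<xi>1 t - \<xi>0 - sqrt (2 * (t0 - t))\<bar> \<le> K * (t0 - t) \<and> \<bar>\<xi>2 t - \<xi>0 + sqrt (2 * (t0 - t))\<bar> \<le> K * (t0 - t) \<and>
    \<bar>Ux t (\<xi>1 t) - sqrt (2 * (t0 - t)) * a\<bar> \<le> (9 * M + \<bar>a\<bar> * K) * (t0 - t) \<and>
    \<bar>Ux t (\<xi>2 t) + sqrt (2 * (t0 - t)) * a\<bar> \<le> (9 * M + \<bar>a\<bar> * K) * (t0 - t)"
proof -
  have "0 < \<bar>a\<bar> * K"
    using K M_nonneg by linarith
  then have "0 < K"
    by (simp add: zero_less_mult_iff)
  then have "\<forall>\<^sub>F t in at_left t0.
      t0 - t < \<epsilon> \<and> K * (t0 - t) \<le> sqrt (2 * (t0 - t)) \<and> 2 * sqrt (2 * (t0 - t)) < \<epsilon>"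
    using \<epsilon> by (intro eventually_conj) real_asymp+
  then obtain b where b: "b < t0" and small: "\<And>t. b < t \<Longrightarrow> t < t0 \<Longrightarrow>
      t0 - t < \<epsilon> \<and> K * (t0 - t) \<le> sqrt (2 * (t0 - t)) \<and> 2 * sqrt (2 * (t0 - t)) < \<epsilon>"
    using eventually_at_left[of "t0 - 1" t0] by auto
  have "\<exists>x1 x2. U t x1 = 0 \<and> U t x2 = 0 \<and> \<bar>x1 - \<xi>0\<bar> < \<epsilon> \<and> \<bar>x2 - \<xi>0\<bar> < \<epsilon> \<and>
      \<bar>x1 - \<xi>0 - sqrt (2 * (t0 - t))\<bar> \<le> K * (t0 - t) \<and> \<bar>x2 - \<xi>0 + sqrt (2 * (t0 - t))\<bar> \<le> K * (t0 - t) \<and>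
      \<bar>Ux t x1 - sqrt (2 * (t0 - t)) * a\<bar> \<le> (9 * M + \<bar>a\<bar> * K) * (t0 - t) \<and>
      \<bar>Ux t x2 + sqrt (2 * (t0 - t)) * a\<bar> \<le> (9 * M + \<bar>a\<bar> * K) * (t0 - t)"
    if t: "b < t" "t < t0" for t
  proof -
    have s: "0 < t0 - t" "t0 - t \<le> r" "2 * sqrt (2 * (t0 - t)) \<le> r"
      using small[OF t] t \<epsilon> by auto
    from roots_before[OF s K] small[OF t] show ?thesis
      by simp (smt (verit))
  qed
  then show thesis
    using that[OF b] by metis
qed

theorem (in fold_model) roots_near_fold:
  "\<exists>\<delta> \<epsilon> \<xi>1 \<xi>2. \<delta> > 0 \<and> \<epsilon> > 0 \<and>
     (\<forall>t. t0 - \<delta> < t \<and> t < t0 \<longrightarrow>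
        U t (\<xi>1 t) = 0 \<and> U t (\<xi>2 t) = 0 \<and> \<bar>\<xi>1 t - \<xi>0\<bar> < \<epsilon> \<and> \<bar>\<xi>2 t - \<xi>0\<bar> < \<epsilon>) \<and>
     (\<lambda>t. \<xi>1 t - \<xi>0 - sqrt (2 * (t0 - t))) \<in> O[at_left t0](\<lambda>t. t0 - t) \<and>
     (\<lambda>t. \<xi>2 t - \<xi>0 + sqrt (2 * (t0 - t))) \<in> O[at_left t0](\<lambda>t. t0 - t) \<and>
     (\<lambda>t. Ux t (\<xi>1 t) - sqrt (2 * (t0 - t)) * a) \<in> O[at_left t0](\<lambda>t. t0 - t) \<and>
     (\<lambda>t. Ux t (\<xi>2 t) + sqrt (2 * (t0 - t)) * a) \<in> O[at_left t0](\<lambda>t. t0 - t) \<and>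
     (\<forall>t x. t0 < t \<and> t < t0 + \<delta> \<and> \<bar>x - \<xi>0\<bar> < \<epsilon> \<longrightarrow> U t x \<noteq> 0)"
proof -
  define \<epsilon> where "\<epsilon> = min r (\<bar>a\<bar> / (2 * M + 1))"
  define K where "K = (38 * M + 1) / \<bar>a\<bar>"
  have \<epsilon>: "0 < \<epsilon>" "\<epsilon> \<le> r" "2 * M * \<epsilon> < \<bar>a\<bar>"
  proof -
    show "0 < \<epsilon>" "\<epsilon> \<le> r"
      using r_pos nondegenerate M_nonneg by (auto simp: \<epsilon>_def)
    have "\<epsilon> \<le> \<bar>a\<bar> / (2 * M + 1)"
      by (simp add: \<epsilon>_def)
    then have "(2 * M + 1) * \<epsilon> \<le> \<bar>a\<bar>"
      using M_nonneg by (simp add: pos_le_divide_eq mult.commute)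
    then show "2 * M * \<epsilon> < \<bar>a\<bar>"
      using \<open>0 < \<epsilon>\<close> by (simp add: algebra_simps)
  qed
  have K: "38 * M < \<bar>a\<bar> * K"
    using nondegenerate by (simp add: K_def)
  show ?thesis
  proof (cases rule: root_branches[OF K \<epsilon>(1,2)])
    case (1 b \<xi>1 \<xi>2)
    note b = 1(1) and roots = 1(2)
    define \<delta> where "\<delta> = min (t0 - b) \<epsilon>"
    show ?thesis
    proof (intro exI conjI allI impI)
      show "0 < \<delta>" "0 < \<epsilon>"
        using b \<epsilon> by (simp_all add: \<delta>_def)
      fix t assume t: "t0 - \<delta> < t \<and> t < t0"
      then have "b < t"
        by (simp add: \<delta>_def min_def split: if_splits)
      then show "U t (\<xi>1 t) = 0" "U t (\<xi>2 t) = 0" "\<bar>\<xi>1 t - \<xi>0\<bar> < \<epsilon>" "\<bar>\<xi>2 t - \<xi>0\<bar> < \<epsilon>"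
        using roots[of t] t by simp_all
    next
      fix t x assume "t0 < t \<and> t < t0 + \<delta> \<and> \<bar>x - \<xi>0\<bar> < \<epsilon>"
      then show "U t x \<noteq> 0"
        using \<epsilon> by (intro nonzero_after[where e = \<epsilon>]) (auto simp: \<delta>_def)
    next
      show "(\<lambda>t. \<xi>1 t - \<xi>0 - sqrt (2 * (t0 - t))) \<in> O[at_left t0](\<lambda>t. t0 - t)"
        "(\<lambda>t. \<xi>2 t - \<xi>0 + sqrt (2 * (t0 - t))) \<in> O[at_left t0](\<lambda>t. t0 - t)"
        by (rule bigo_at_left_of_bound[OF b, where C = K]; use roots in simp)+
      show "(\<lambda>t. Ux t (\<xi>1 t) - sqrt (2 * (t0 - t)) * a) \<in> O[at_left t0](\<lambda>t. t0 - t)"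
        "(\<lambda>t. Ux t (\<xi>2 t) + sqrt (2 * (t0 - t)) * a) \<in> O[at_left t0](\<lambda>t. t0 - t)"
        by (rule bigo_at_left_of_bound[OF b, where C = "9 * M + \<bar>a\<bar> * K"]; use roots in simp)+
    qed
  qed
qed

lemma (in smooth_fold) fold_model:
  assumes "a \<noteq> 0"
  shows "fold_model (\<lambda>t x. g (t, x)) (\<lambda>t x. pd False g (t, x)) a t0 \<xi>0 r (2 * L)"
proof unfold_locales
  show "isCont (\<lambda>x. g (t, x)) x" if "\<bar>t - t0\<bar> \<le> r" "\<bar>x - \<xi>0\<bar> \<le> r" for t x
    using has_derivative_space[OF that, of "[]"] by (simp add: DERIV_isCont)
qed (use assms r_pos r_le_1 L_nonneg value_near_center slope_near_center in auto)

theorem proposition4p1: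
  fixes f u0 :: "real \<Rightarrow> real" and u :: "real \<Rightarrow> real \<Rightarrow> real" and t0 \<xi>0 :: real
  assumes f_smooth: "smooth_real f"
    and f'0: "deriv f 0 = 0"
    and u0_smooth: "smooth_real u0"
    and u0_bdd: "\<forall>n. bounded (range ((deriv ^^ n) u0))"
    and u_smooth: "smooth_on2 ({0<..} \<times> UNIV) (\<lambda>(t, x). u t x)"
    and u_cont0: "continuous_on ({0..} \<times> UNIV) (\<lambda>(t, x). u t x)"
    and u_init: "\<forall>x. u 0 x = u0 x"
    and pde: "\<forall>t x. t > 0 \<longrightarrow>
       deriv (\<lambda>s. u s x) t =
         deriv (\<lambda>y. deriv (\<lambda>z. u t z) y) x + deriv f (u t x) * deriv (\<lambda>y. u t y) x"
    and t0_pos: "t0 > 0"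
    and root: "u t0 \<xi>0 = 0"
    and crit: "deriv (\<lambda>y. u t0 y) \<xi>0 = 0"
    and nondeg: "deriv (\<lambda>y. deriv (\<lambda>z. u t0 z) y) \<xi>0 \<noteq> 0"
  shows "\<exists>\<delta> \<epsilon> \<xi>1 \<xi>2. \<delta> > 0 \<and> \<epsilon> > 0 \<and>
     (\<forall>t. t0 - \<delta> < t \<and> t < t0 \<longrightarrow>
        u t (\<xi>1 t) = 0 \<and> u t (\<xi>2 t) = 0 \<and> \<bar>\<xi>1 t - \<xi>0\<bar> < \<epsilon> \<and> \<bar>\<xi>2 t - \<xi>0\<bar> < \<epsilon>) \<and>
     (\<lambda>t. \<xi>1 t - \<xi>0 - sqrt (2 * (t0 - t))) \<in> O[at_left t0](\<lambda>t. t0 - t) \<and>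
     (\<lambda>t. \<xi>2 t - \<xi>0 + sqrt (2 * (t0 - t))) \<in> O[at_left t0](\<lambda>t. t0 - t) \<and>
     (\<lambda>t. deriv (\<lambda>y. u t y) (\<xi>1 t)
            - sqrt (2 * (t0 - t)) * deriv (\<lambda>y. deriv (\<lambda>z. u t0 z) y) \<xi>0)
        \<in> O[at_left t0](\<lambda>t. t0 - t) \<and>
     (\<lambda>t. deriv (\<lambda>y. u t y) (\<xi>2 t)
            + sqrt (2 * (t0 - t)) * deriv (\<lambda>y. deriv (\<lambda>z. u t0 z) y) \<xi>0)
        \<in> O[at_left t0](\<lambda>t. t0 - t) \<and>
     (\<forall>t x. t0 < t \<and> t < t0 + \<delta> \<and> \<bar>x - \<xi>0\<bar> < \<epsilon> \<longrightarrow> u t x \<noteq> 0)"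
proof -
  define a where "a = deriv (\<lambda>y. deriv (\<lambda>z. u t0 z) y) \<xi>0"
  define g where "g = (\<lambda>(t, x). u t x)"
  define r where "r = min 1 (t0 / 2)"
  define box where "box = {t0 - r..t0 + r} \<times> {\<xi>0 - r..\<xi>0 + r}"
  have r: "0 < r" "r \<le> 1"
    using t0_pos by (simp_all add: r_def)
  have "box \<subseteq> {0<..} \<times> UNIV"
    using t0_pos by (auto simp: box_def r_def)
  then have smooth: "smooth_on2 box g"
    using u_smooth smooth_on2_subset unfolding g_def by blast
  obtain L where L: "\<And>ds p. length ds \<le> 3 \<Longrightarrow> p \<in> box \<Longrightarrow> \<bar>fold pd ds g p\<bar> \<le> L"
    using smooth_on2_derivatives_bounded[OF smooth] by (metis box_def compact_Icc compact_Times)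
  (* The equation is used only at (t0, \<xi>0), where u_x = 0 reduces it to u_t = u_xx whatever f is. *)
  have "smooth_fold g t0 \<xi>0 r a L"
    using smooth r L root crit unfolding box_def
    by unfold_locales (simp_all add: g_def pd_def a_def pde t0_pos)
  then have "fold_model (\<lambda>t x. u t x) (\<lambda>t x. deriv (\<lambda>y. u t y) x) a t0 \<xi>0 r (2 * L)"
    using smooth_fold.fold_model nondeg by (fastforce simp: a_def g_def pd_def)
  then show ?thesis
    unfolding a_def by (rule fold_model.roots_near_fold)
qed

end
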